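(* Let $n\ge 1$, $\nu>0$, let $M\in\mathbb{R}^{n\times n}$ be diagonal with positive diagonal entries, let $L\in\mathbb{R}^{n\times n}$ be nonsingular, and let $\Pi_k$ be an $n\times n$ diagonal matrix with diagonal entries in $\{0,1\}$. For $\alpha_u,\alpha_y\ge0$ with $\max\{\alpha_u,\alpha_y\}>0$ set $\gamma_1=\frac{\alpha_y^2\nu}{\alpha_y^2\nu+\alpha_u^2}$, $\gamma_2=\frac{\alpha_u^2}{\alpha_y^2\nu+\alpha_u^2}$, $$\mathbb{S}_k=\nu LM^{-1}L^T+M-\frac{1}{\alpha_y^2\nu+\alpha_u^2}(\alpha_y\nu LM^{-1}-\alpha_u I)\Pi_k M\Pi_k(\alpha_y\nu LM^{-1}-\alpha_u I)^T,$$ $L_1=\sqrt{\nu}L(I-\gamma_1\Pi_k)^{1/2}+(I-\gamma_2\Pi_k)^{1/2}M$, $\widehat{\mathbb{S}}_k=L_1M^{-1}L_1^T$, assumed nonsingular. Let $\lambda$ be an eigenvalue of $\widehat{\mathbb{S}}_k^{-1}\mathbb{S}_k$. Then in the two cases below $$\lambda\le\zeta^2+(1+\zeta)^2,$$ where: (i) if $(\alpha_u,\alpha_y)=(1,0)$, then $\zeta=\big\|M^{1/2}\big(\sqrt{\nu}L+M(I-\Pi_k)\big)^{-1}\sqrt{\nu}LM^{-1/2}\big\|$; moreover, if $L+L^T$ is positive definite, then (with $M,L,\Pi_k$ fixed) $\zeta$ is bounded, as $\nu\to0$, by a constant independent of $\nu$; (ii) if $(\alpha_u,\alpha_y)=(0,1)$,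 then $\zeta=\big\|\big(I+\sqrt{\nu}M^{-1/2}LM^{-1/2}(I-\Pi_k)\big)^{-1}\big\|$; moreover $\zeta\to1$ as $\nu\to0$.
   Context: $\|\cdot\|$ is the spectral norm. Square roots of nonnegative diagonal matrices are taken entrywise. Case (i) corresponds to control constraints and case (ii) to state constraints. *)

theory Defs
  imports "HOL-Analysis.Analysis"
begin

definition is_diag :: "real^'n^'n \<Rightarrow> bool" where
  "is_diag A \<longleftrightarrow> (\<forall>i j. i \<noteq> j \<longrightarrow> A $ i $ j = 0)"

definition dsqrt :: "real^'n^'n \<Rightarrow> real^'n^'n" where
  "dsqrt A = (\<chi> i j. if i = j then sqrt (A $ i $ i) else 0)"

definition specnorm :: "real^'n^'n \<Rightarrow> real" where
  "specnorm A = onorm (\<lambda>x. A *v x)"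

definition is_eigenvalue :: "real^'n^'n \<Rightarrow> real \<Rightarrow> bool" where
  "is_eigenvalue A lam \<longleftrightarrow> (\<exists>v. v \<noteq> 0 \<and> A *v v = lam *\<^sub>R v)"

definition posdef :: "real^'n^'n \<Rightarrow> bool" where
  "posdef A \<longleftrightarrow> (\<forall>x. x \<noteq> 0 \<longrightarrow> x \<bullet> (A *v x) > 0)"

definition gam1 :: "real \<Rightarrow> real \<Rightarrow> real \<Rightarrow> real" where
  "gam1 \<nu> au ay = ay\<^sup>2 * \<nu> / (ay\<^sup>2 * \<nu> + au\<^sup>2)"

definition gam2 :: "real \<Rightarrow> real \<Rightarrow> real \<Rightarrow> real" where
  "gam2 \<nu> au ay = au\<^sup>2 / (ay\<^sup>2 * \<nu> + au\<^sup>2)"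

definition Smat :: "real^'n^'n \<Rightarrow> real^'n^'n \<Rightarrow> real^'n^'n \<Rightarrow> real \<Rightarrow> real \<Rightarrow> real \<Rightarrow> real^'n^'n" where
  "Smat M L P \<nu> au ay =
     (let Mi = matrix_inv M;
          B = (ay * \<nu>) *\<^sub>R (L ** Mi) - au *\<^sub>R mat 1
      in \<nu> *\<^sub>R (L ** Mi ** transpose L) + M
         - (1 / (ay\<^sup>2 * \<nu> + au\<^sup>2)) *\<^sub>R (B ** P ** M ** P ** transpose B))"

definition L1mat :: "real^'n^'n \<Rightarrow> real^'n^'n \<Rightarrow> real^'n^'n \<Rightarrow> real \<Rightarrow> real \<Rightarrow> real \<Rightarrow> real^'n^'n" where
  "L1mat M L P \<nu> au ay =
     sqrt \<nu> *\<^sub>R (L ** dsqrt (mat 1 - gam1 \<nu> au ay *\<^sub>R P))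
     + dsqrt (mat 1 - gam2 \<nu> au ay *\<^sub>R P) ** M"

definition Shat :: "real^'n^'n \<Rightarrow> real^'n^'n \<Rightarrow> real^'n^'n \<Rightarrow> real \<Rightarrow> real \<Rightarrow> real \<Rightarrow> real^'n^'n" where
  "Shat M L P \<nu> au ay =
     (let L1 = L1mat M L P \<nu> au ay in L1 ** matrix_inv M ** transpose L1)"

definition zeta1 :: "real^'n^'n \<Rightarrow> real^'n^'n \<Rightarrow> real^'n^'n \<Rightarrow> real \<Rightarrow> real" where
  "zeta1 M L P \<nu> = specnorm (dsqrt M ** matrix_inv (sqrt \<nu> *\<^sub>R L + M ** (mat 1 - P))
       ** (sqrt \<nu> *\<^sub>R L) ** dsqrt (matrix_inv M))"

definition zeta2 :: "real^'n^'n \<Rightarrow> real^'n^'n \<Rightarrow> real^'n^'n \<Rightarrow> real \<Rightarrow> real" where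
  "zeta2 M L P \<nu> = specnorm (matrix_inv (mat 1 + sqrt \<nu> *\<^sub>R
       (dsqrt (matrix_inv M) ** L ** dsqrt (matrix_inv M) ** (mat 1 - P))))"

end

theory Submission
  imports Defs
begin

text \<open>
  In both cases a scaling by M^(-1/2) writes the preconditioner and the Schur complement as
  Shat = (A + B) (A + B)^T and S = A A^T + B B^T, with zeta = |(A + B)^-1 B|. For an
  eigenpair S v = lambda Shat v put y = (A + B)^T v; then
  lambda |y|^2 = |A^T v|^2 + |B^T v|^2, where B^T v = ((A + B)^-1 B)^T y has norm at most
  zeta |y| and A^T v = y - B^T v has norm at most (1 + zeta) |y|.

  In case (ii) zeta is the norm of (I + E)^-1 with |E| = O(sqrt nu), and
  1/(1 + |E|) <= |(I + E)^-1| <= 1/(1 - |E|). In case (i)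
  zeta <= |M^(1/2)| (1 + |(sqrt nu L + D)^-1 D|) |M^(-1/2)| with D = M (I - Pi).
  If (sqrt nu L + D) e = D v, testing with e and using e . L e >= 0 gives
  |D^(1/2) e| <= |D^(1/2) v|; moreover (L e)_i = 0 wherever D_ii = 0, so the coercivity
  c |e|^2 <= e . L e bounds |e| by a multiple of |D^(1/2) e| that does not depend on nu.
\<close>

section \<open>Matrix inverses and the spectral norm\<close>

lemma matrix_inv_right:
  fixes A :: "'a::semiring_1^'n^'m"
  assumes "invertible A"
  shows "A ** matrix_inv A = mat 1"
  using someI_ex[OF assms[unfolded invertible_def]] unfolding matrix_inv_def by blast

lemma matrix_inv_left:
  fixes A :: "'a::semiring_1^'n^'m"
  assumes "invertible A"
  shows "matrix_inv A ** A = mat 1"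
  using someI_ex[OF assms[unfolded invertible_def]] unfolding matrix_inv_def by blast

lemma matrix_inv_unique:
  fixes A B :: "'a::field^'n^'n"
  assumes AB: "A ** B = mat 1"
  shows "matrix_inv A = B"
proof -
  have "invertible A"
    using AB matrix_left_right_inverse invertible_def by blast
  then have "matrix_inv A = (matrix_inv A ** A) ** B"
    by (simp add: matrix_mul_assoc[symmetric] AB)
  then show ?thesis
    using matrix_inv_left[OF \<open>invertible A\<close>] by simp
qed

lemma matrix_inv_mult:
  fixes A B :: "'a::field^'n^'n"
  assumes "invertible A" "invertible B"
  shows "matrix_inv (A ** B) = matrix_inv B ** matrix_inv A"
proof (rule matrix_inv_unique)
  have "A ** B ** (matrix_inv B ** matrix_inv A) = A ** (B ** matrix_inv B) ** matrix_inv A"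
    by (simp add: matrix_mul_assoc)
  then show "A ** B ** (matrix_inv B ** matrix_inv A) = mat 1"
    by (simp add: matrix_inv_right assms)
qed

lemma invertible_if_kernel_trivial:
  fixes A :: "'a::field^'n^'n"
  assumes "\<And>x. A *v x = 0 \<Longrightarrow> x = 0"
  shows "invertible A"
  using assms matrix_left_invertible_ker invertible_left_inverse by blast

lemma invertible_factor_of_gram:
  fixes C :: "'a::field^'n^'n"
  assumes "invertible (C ** transpose C)"
  shows "invertible C"
  using assms by (simp add: invertible_det_nz det_mul)

lemma matrix_add_rdistrib:
  fixes A B :: "'a::semiring_1^'n^'m"
  shows "(A + B) ** C = A ** C + B ** C"
  by (simp add: matrix_matrix_mult_def vec_eq_iff algebra_simps sum.distrib)

lemma matrix_mult_scaleR_right: "A ** (k *\<^sub>R B) = k *\<^sub>R (A ** B)" for A :: "real^'n^'m"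
  by (simp add: matrix_scalar_ac scalar_matrix_assoc)

lemma transpose_add: "transpose (A + B) = transpose A + transpose B"
  by (simp add: transpose_def vec_eq_iff)

lemma inner_transpose_mult_vec: "(transpose A *v x) \<bullet> y = x \<bullet> ((A::real^'n^'m) *v y)"
  by (simp add: dot_lmul_matrix)

lemma inner_gram_eq_norm_sq:
  "x \<bullet> ((A ** transpose A) *v x) = (norm (transpose A *v x))\<^sup>2" for A :: "real^'n^'m"
  by (simp add: power2_norm_eq_inner inner_transpose_mult_vec matrix_vector_mul_assoc[symmetric]
      del: transpose_matrix_vector)

lemma specnorm_mult_vec_le: "norm (A *v x) \<le> specnorm A * norm x"
  unfolding specnorm_def by (rule onorm) (rule matrix_vector_mul_bounded_linear)

lemma specnorm_nonneg: "0 \<le> specnorm A"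
  unfolding specnorm_def by (rule onorm_pos_le) (rule matrix_vector_mul_bounded_linear)

lemma specnorm_le:
  assumes "\<And>x. norm (A *v x) \<le> b * norm x"
  shows "specnorm A \<le> b"
  unfolding specnorm_def using assms by (rule onorm_le)

lemma specnorm_mult_le: "specnorm (A ** B) \<le> specnorm A * specnorm B"
proof (rule specnorm_le)
  fix x
  have "norm ((A ** B) *v x) \<le> specnorm A * norm (B *v x)"
    by (simp add: specnorm_mult_vec_le flip: matrix_vector_mul_assoc)
  also have "\<dots> \<le> specnorm A * (specnorm B * norm x)"
    by (intro mult_left_mono specnorm_mult_vec_le specnorm_nonneg)
  finally show "norm ((A ** B) *v x) \<le> specnorm A * specnorm B * norm x"
    by (simp add: mult.assoc)
qed

lemma specnorm_scaleR: "specnorm (c *\<^sub>R A) = \<bar>c\<bar> * specnorm A"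
  unfolding specnorm_def scaleR_matrix_vector_assoc[symmetric]
  by (rule onorm_scaleR) (rule matrix_vector_mul_bounded_linear)

lemma specnorm_transpose_mult_vec_le: "norm (transpose A *v y) \<le> specnorm A * norm y"
proof -
  let ?z = "transpose A *v y"
  have "(norm ?z)\<^sup>2 = y \<bullet> (A *v ?z)"
    by (simp add: power2_norm_eq_inner inner_transpose_mult_vec del: transpose_matrix_vector)
  also have "\<dots> \<le> norm y * (specnorm A * norm ?z)"
    by (intro order_trans[OF norm_cauchy_schwarz] mult_left_mono specnorm_mult_vec_le) simp
  finally have "norm ?z * norm ?z \<le> (specnorm A * norm y) * norm ?z"
    by (simp add: power2_eq_square algebra_simps)
  then show ?thesis
    using specnorm_nonneg[of A] by (cases "norm ?z = 0") auto
qed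

section \<open>The eigenvalue bound\<close>

lemma eigenvalue_bound_split_factor:
  fixes A B Sh S :: "real^'n^'n"
  defines "\<zeta> \<equiv> specnorm (matrix_inv (A + B) ** B)"
  assumes Sh: "Sh = (A + B) ** transpose (A + B)" and S: "S = A ** transpose A + B ** transpose B"
    and inv: "invertible Sh" and ev: "is_eigenvalue (matrix_inv Sh ** S) lam"
  shows "lam \<le> \<zeta>\<^sup>2 + (1 + \<zeta>)\<^sup>2"
proof -
  define C where "C = A + B"
  obtain v where "v \<noteq> 0" and v: "(matrix_inv Sh ** S) *v v = lam *\<^sub>R v"
    using ev unfolding is_eigenvalue_def by blast
  define y where "y = transpose C *v v"
  have "S *v v = Sh *v (lam *\<^sub>R v)"
    unfolding v[symmetric] using inv by (simp add: matrix_vector_mul_assoc matrix_mul_assoc matrix_inv_right)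
  then have "v \<bullet> (S *v v) = lam * (v \<bullet> (Sh *v v))"
    by (simp add: matrix_vector_mult_scaleR)
  then have energy: "lam * (norm y)\<^sup>2 = (norm (transpose A *v v))\<^sup>2 + (norm (transpose B *v v))\<^sup>2"
    by (simp add: Sh S y_def C_def matrix_vector_mult_add_rdistrib inner_add_right inner_gram_eq_norm_sq
        del: transpose_matrix_vector)
  have invC: "invertible C"
    using inv invertible_factor_of_gram unfolding Sh C_def by blast
  then have "v = matrix_inv (transpose C) *v y"
    by (simp add: y_def matrix_vector_mul_assoc matrix_inv_left transpose_invertible
        del: transpose_matrix_vector)
  with \<open>v \<noteq> 0\<close> have "y \<noteq> 0"
    by auto
  have "transpose (matrix_inv C) ** transpose C = mat 1"
    using invC by (simp add: matrix_transpose_mul[symmetric] matrix_inv_right)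
  then have Bv: "transpose B *v v = transpose (matrix_inv C ** B) *v y"
    by (simp add: y_def matrix_transpose_mul matrix_vector_mul_assoc matrix_mul_assoc[symmetric]
        del: transpose_matrix_vector)
  have nB: "norm (transpose B *v v) \<le> \<zeta> * norm y"
    unfolding Bv \<zeta>_def C_def[symmetric] by (rule specnorm_transpose_mult_vec_le)
  have Av: "transpose A *v v = y - transpose B *v v"
    by (simp add: y_def C_def transpose_add matrix_vector_mult_add_rdistrib del: transpose_matrix_vector)
  have nA: "norm (transpose A *v v) \<le> (1 + \<zeta>) * norm y"
    unfolding Av using norm_triangle_ineq4[of y "transpose B *v v"] nB by (simp add: algebra_simps)
  have "lam * (norm y)\<^sup>2 \<le> ((1 + \<zeta>) * norm y)\<^sup>2 + (\<zeta> * norm y)\<^sup>2"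
    unfolding energy by (intro add_mono power_mono nA nB) simp_all
  also have "\<dots> = (\<zeta>\<^sup>2 + (1 + \<zeta>)\<^sup>2) * (norm y)\<^sup>2"
    by (simp add: power2_eq_square algebra_simps)
  finally show ?thesis
    using \<open>y \<noteq> 0\<close> by simp
qed

section \<open>Diagonal matrices\<close>

definition diag_mat :: "('n::finite \<Rightarrow> real) \<Rightarrow> real^'n^'n" where
  "diag_mat d = (\<chi> i j. if i = j then d i else 0)"

lemma diag_mat_nth [simp]: "diag_mat d $ i $ j = (if i = j then d i else 0)"
  by (simp add: diag_mat_def)

lemma is_diag_eq_diag_mat: "is_diag A \<Longrightarrow> A = diag_mat (\<lambda>i. A $ i $ i)"
  by (auto simp: is_diag_def vec_eq_iff)

lemma mat_one_eq_diag_mat: "mat 1 = diag_mat (\<lambda>_. 1)"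
  by (simp add: vec_eq_iff mat_def)

lemma diag_mat_mult_vec: "diag_mat d *v x = (\<chi> i. d i * x $ i)"
  by (simp add: vec_eq_iff matrix_vector_mult_def if_distrib[of "\<lambda>y. y * _"]
      if_distrib[of "\<lambda>y. _ * y"] cong: if_cong)

lemma diag_mat_mult [simp]: "diag_mat a ** diag_mat b = diag_mat (\<lambda>i. a i * b i)"
  by (simp add: vec_eq_iff matrix_matrix_mult_def if_distrib[of "\<lambda>y. y * _"]
      if_distrib[of "\<lambda>y. _ * y"] cong: if_cong)

lemma matrix_mult_diag_mat_assoc [simp]:
  "X ** diag_mat a ** diag_mat b = X ** diag_mat (\<lambda>i. a i * b i)"
  by (simp add: matrix_mul_assoc[symmetric])

lemma matrix_mult_diag_mat_one [simp]: "X ** diag_mat (\<lambda>_. 1) = X"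
  by (simp add: mat_one_eq_diag_mat[symmetric])

lemma transpose_diag_mat [simp]: "transpose (diag_mat d) = diag_mat d"
  by (simp add: vec_eq_iff transpose_def)

lemma diag_mat_add [simp]: "diag_mat a + diag_mat b = diag_mat (\<lambda>i. a i + b i)"
  by (simp add: vec_eq_iff)

lemma diag_mat_diff [simp]: "diag_mat a - diag_mat b = diag_mat (\<lambda>i. a i - b i)"
  by (simp add: vec_eq_iff)

lemma diag_mat_uminus [simp]: "- diag_mat a = diag_mat (\<lambda>i. - a i)"
  by (simp add: vec_eq_iff)

lemma diag_mat_zero [simp]: "diag_mat (\<lambda>_. 0) = 0"
  by (simp add: vec_eq_iff)

lemma dsqrt_diag_mat [simp]: "dsqrt (diag_mat a) = diag_mat (\<lambda>i. sqrt (a i))"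
  by (simp add: vec_eq_iff dsqrt_def)

lemma matrix_inv_diag_mat:
  "(\<And>i. a i \<noteq> 0) \<Longrightarrow> matrix_inv (diag_mat a) = diag_mat (\<lambda>i. 1 / a i)"
  by (rule matrix_inv_unique) (simp add: mat_one_eq_diag_mat)

lemma invertible_diag_mat: "(\<And>i. a i \<noteq> 0) \<Longrightarrow> invertible (diag_mat a)"
  unfolding invertible_def
  by (rule exI[of _ "diag_mat (\<lambda>i. 1 / a i)"]) (simp add: mat_one_eq_diag_mat)

lemma matrix_diag_mat_sandwich_add:
  "X ** diag_mat a ** Y + X ** diag_mat b ** Y = X ** diag_mat (\<lambda>i. a i + b i) ** Y"
  by (simp flip: diag_mat_add add: matrix_add_ldistrib matrix_add_rdistrib)

section \<open>Factorisation in the two cases\<close>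

lemma zero_one_idempotent:
  assumes "p \<in> {0, 1::real}"
  shows "sqrt (1 - p) = 1 - p" "sqrt p = p" "p * p = p"
  using assms by auto

lemma control_constraint_factorization:
  fixes L :: "real^'n^'n"
  assumes m: "\<And>i. m i > 0" and p: "\<And>i. p i \<in> {0, 1}" and \<nu>: "\<nu> > 0"
  defines "A \<equiv> diag_mat (\<lambda>i. (1 - p i) * sqrt (m i))"
    and "B \<equiv> sqrt \<nu> *\<^sub>R (L ** diag_mat (\<lambda>i. 1 / sqrt (m i)))"
  shows "Shat (diag_mat m) L (diag_mat p) \<nu> 1 0 = (A + B) ** transpose (A + B)"
    and "Smat (diag_mat m) L (diag_mat p) \<nu> 1 0 = A ** transpose A + B ** transpose B"
    and "invertible (Shat (diag_mat m) L (diag_mat p) \<nu> 1 0) \<Longrightarrow>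
      zeta1 (diag_mat m) L (diag_mat p) \<nu> = specnorm (matrix_inv (A + B) ** B)"
proof -
  define L1 where "L1 = sqrt \<nu> *\<^sub>R L + diag_mat (\<lambda>i. (1 - p i) * m i)"
  define Ri where "Ri = diag_mat (\<lambda>i. 1 / sqrt (m i))"
  have m0: "\<And>i. m i \<noteq> 0"
    using m by (metis less_irrefl)
  have Mi: "matrix_inv (diag_mat m) = diag_mat (\<lambda>i. 1 / m i)"
    by (rule matrix_inv_diag_mat[OF m0])
  note p01 = zero_one_idempotent[OF p]
  have m_div_sqrt: "\<And>c i. c * m i / sqrt (m i) = c * sqrt (m i)"
    using m by (simp add: less_imp_le real_div_sqrt flip: times_divide_eq_right)
  have "L1mat (diag_mat m) L (diag_mat p) \<nu> 1 0 = L1"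
    unfolding L1mat_def gam1_def gam2_def L1_def by (simp add: mat_one_eq_diag_mat p01)
  moreover have C: "L1 ** Ri = A + B"
    unfolding L1_def A_def B_def Ri_def
    by (simp add: matrix_add_rdistrib scalar_matrix_assoc[symmetric] m abs_of_pos m_div_sqrt)
  ultimately show Sh: "Shat (diag_mat m) L (diag_mat p) \<nu> 1 0 = (A + B) ** transpose (A + B)"
    unfolding Shat_def Let_def Mi C[symmetric] Ri_def
    by (simp add: matrix_transpose_mul matrix_mul_assoc m abs_of_pos)
  show "Smat (diag_mat m) L (diag_mat p) \<nu> 1 0 = A ** transpose A + B ** transpose B"
    unfolding Smat_def Let_def Mi A_def B_def
    by (simp add: matrix_transpose_mul matrix_mul_assoc m abs_of_pos mat_one_eq_diag_mat
        scalar_matrix_assoc[symmetric] matrix_mult_scaleR_right transpose_scalar algebra_simps p01 \<nu> less_imp_le)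
  assume "invertible (Shat (diag_mat m) L (diag_mat p) \<nu> 1 0)"
  then have "invertible (A + B)"
    unfolding Sh by (rule invertible_factor_of_gram)
  then have "invertible L1"
    using C invertible_det_nz by (metis det_mul mult_zero_left)
  have "invertible Ri"
    unfolding Ri_def by (rule invertible_diag_mat) (simp add: m less_imp_le m0)
  have "sqrt \<nu> *\<^sub>R L + diag_mat m ** (mat 1 - diag_mat p) = L1"
    unfolding L1_def by (simp add: mat_one_eq_diag_mat mult.commute)
  then show "zeta1 (diag_mat m) L (diag_mat p) \<nu> = specnorm (matrix_inv (A + B) ** B)"
    unfolding C[symmetric] matrix_inv_mult[OF \<open>invertible L1\<close> \<open>invertible Ri\<close>]
    unfolding zeta1_def Mi B_def Ri_def
    by (simp add: matrix_inv_diag_mat m0 scalar_matrix_assoc[symmetric] matrix_mult_scaleR_right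
        matrix_mul_assoc real_sqrt_divide)
qed

lemma state_constraint_factorization:
  fixes L :: "real^'n^'n"
  assumes m: "\<And>i. m i > 0" and p: "\<And>i. p i \<in> {0, 1}" and \<nu>: "\<nu> > 0"
  defines "A \<equiv> sqrt \<nu> *\<^sub>R (L ** diag_mat (\<lambda>i. (1 - p i) / sqrt (m i)))"
    and "B \<equiv> diag_mat (\<lambda>i. sqrt (m i))"
  shows "Shat (diag_mat m) L (diag_mat p) \<nu> 0 1 = (A + B) ** transpose (A + B)"
    and "Smat (diag_mat m) L (diag_mat p) \<nu> 0 1 = A ** transpose A + B ** transpose B"
    and "invertible (Shat (diag_mat m) L (diag_mat p) \<nu> 0 1) \<Longrightarrow>
      zeta2 (diag_mat m) L (diag_mat p) \<nu> = specnorm (matrix_inv (A + B) ** B)"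
proof -
  define L1 where "L1 = sqrt \<nu> *\<^sub>R (L ** diag_mat (\<lambda>i. 1 - p i)) + diag_mat m"
  define Ri where "Ri = diag_mat (\<lambda>i. 1 / sqrt (m i))"
  have m0: "\<And>i. m i \<noteq> 0"
    using m by (metis less_irrefl)
  have Mi: "matrix_inv (diag_mat m) = diag_mat (\<lambda>i. 1 / m i)"
    by (rule matrix_inv_diag_mat[OF m0])
  note p01 = zero_one_idempotent[OF p]
  have "L1mat (diag_mat m) L (diag_mat p) \<nu> 0 1 = L1"
    unfolding L1mat_def gam1_def gam2_def L1_def using \<nu> by (simp add: mat_one_eq_diag_mat p01)
  moreover have C: "L1 ** Ri = A + B"
    unfolding L1_def A_def B_def Ri_def
    by (simp add: matrix_add_rdistrib scalar_matrix_assoc[symmetric] m abs_of_pos less_imp_le real_div_sqrt)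
  ultimately show Sh: "Shat (diag_mat m) L (diag_mat p) \<nu> 0 1 = (A + B) ** transpose (A + B)"
    unfolding Shat_def Let_def Mi C[symmetric] Ri_def
    by (simp add: matrix_transpose_mul matrix_mul_assoc m abs_of_pos)
  show "Smat (diag_mat m) L (diag_mat p) \<nu> 0 1 = A ** transpose A + B ** transpose B"
    unfolding Smat_def Let_def Mi A_def B_def
    apply (simp add: matrix_transpose_mul matrix_mul_assoc m abs_of_pos mat_one_eq_diag_mat
        scalar_matrix_assoc[symmetric] matrix_mult_scaleR_right transpose_scalar algebra_simps p01 \<nu> less_imp_le)
    apply (simp add: scaleR_add_right[symmetric] matrix_diag_mat_sandwich_add \<nu> less_imp_le m0 p01
        add_divide_distrib[symmetric])
    done
  assume "invertible (Shat (diag_mat m) L (diag_mat p) \<nu> 0 1)"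
  then have "invertible (A + B)"
    unfolding Sh by (rule invertible_factor_of_gram)
  have "invertible Ri"
    unfolding Ri_def by (rule invertible_diag_mat) (simp add: m less_imp_le m0)
  have "matrix_inv Ri = B"
    unfolding Ri_def B_def by (subst matrix_inv_diag_mat) (simp_all add: m0)
  have scaled: "mat 1 + sqrt \<nu> *\<^sub>R (dsqrt (matrix_inv (diag_mat m)) ** L ** dsqrt (matrix_inv (diag_mat m))
      ** (mat 1 - diag_mat p)) = Ri ** (L1 ** Ri)"
    unfolding L1_def Ri_def Mi
    by (simp add: matrix_add_rdistrib matrix_add_ldistrib scalar_matrix_assoc[symmetric] matrix_mult_scaleR_right
        matrix_mul_assoc real_sqrt_divide mat_one_eq_diag_mat m abs_of_pos m0)
  show "zeta2 (diag_mat m) L (diag_mat p) \<nu> = specnorm (matrix_inv (A + B) ** B)"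
    unfolding zeta2_def scaled C matrix_inv_mult[OF \<open>invertible Ri\<close> \<open>invertible (A + B)\<close>]
      \<open>matrix_inv Ri = B\<close> ..
qed

section \<open>Perturbations of the identity\<close>

lemma norm_id_plus_mult_vec_bounds:
  fixes E :: "real^'n^'n"
  shows "(1 - specnorm E) * norm y \<le> norm ((mat 1 + E) *v y)"
    and "norm ((mat 1 + E) *v y) \<le> (1 + specnorm E) * norm y"
proof -
  have "(mat 1 + E) *v y = y + E *v y"
    by (simp add: matrix_vector_mult_add_rdistrib)
  then show "(1 - specnorm E) * norm y \<le> norm ((mat 1 + E) *v y)"
    and "norm ((mat 1 + E) *v y) \<le> (1 + specnorm E) * norm y"
    using norm_triangle_ineq[of y "E *v y"] norm_triangle_ineq2[of y "- (E *v y)"]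
      specnorm_mult_vec_le[of E y]
    by (auto simp: algebra_simps)
qed

lemma invertible_id_plus_small:
  fixes E :: "real^'n^'n"
  assumes "specnorm E < 1"
  shows "invertible (mat 1 + E)"
proof (rule invertible_if_kernel_trivial)
  fix x
  assume "(mat 1 + E) *v x = 0"
  then have "(1 - specnorm E) * norm x \<le> 0"
    using norm_id_plus_mult_vec_bounds(1)[of E x] by simp
  with assms show "x = 0"
    by (simp add: mult_le_0_iff)
qed

lemma specnorm_inv_id_plus_bounds:
  fixes E :: "real^'n^'n"
  assumes small: "specnorm E < 1"
  shows "1 / (1 + specnorm E) \<le> specnorm (matrix_inv (mat 1 + E))"
    and "specnorm (matrix_inv (mat 1 + E)) \<le> 1 / (1 - specnorm E)"
proof -
  let ?N = "mat 1 + E"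
  have inv: "invertible ?N"
    using small by (rule invertible_id_plus_small)
  have N_inv: "?N *v (matrix_inv ?N *v x) = x" "matrix_inv ?N *v (?N *v x) = x" for x
    using inv by (simp_all add: matrix_vector_mul_assoc matrix_inv_right matrix_inv_left)
  show "specnorm (matrix_inv ?N) \<le> 1 / (1 - specnorm E)"
  proof (rule specnorm_le)
    fix x
    have "(1 - specnorm E) * norm (matrix_inv ?N *v x) \<le> norm x"
      using norm_id_plus_mult_vec_bounds(1)[of E "matrix_inv ?N *v x"] by (simp add: N_inv)
    then show "norm (matrix_inv ?N *v x) \<le> 1 / (1 - specnorm E) * norm x"
      using small by (simp add: field_simps)
  qed
  obtain y :: "real^'n" where "y \<noteq> 0"
    using vector_choose_size[of 1] by force
  have "norm y \<le> specnorm (matrix_inv ?N) * norm (?N *v y)"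
    using specnorm_mult_vec_le[of "matrix_inv ?N" "?N *v y"] by (simp add: N_inv)
  also have "\<dots> \<le> specnorm (matrix_inv ?N) * ((1 + specnorm E) * norm y)"
    by (intro mult_left_mono norm_id_plus_mult_vec_bounds(2) specnorm_nonneg)
  finally have "1 \<le> specnorm (matrix_inv ?N) * (1 + specnorm E)"
    using \<open>y \<noteq> 0\<close> by (simp add: mult.assoc[symmetric])
  moreover have "0 < 1 + specnorm E"
    using specnorm_nonneg[of E] by linarith
  ultimately show "1 / (1 + specnorm E) \<le> specnorm (matrix_inv ?N)"
    by (simp add: field_simps)
qed

lemma tendsto_specnorm_inv_id_plus:
  fixes E :: "'a \<Rightarrow> real^'n^'n"
  assumes E: "((\<lambda>x. specnorm (E x)) \<longlongrightarrow> 0) F"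
  shows "((\<lambda>x. specnorm (matrix_inv (mat 1 + E x))) \<longlongrightarrow> 1) F"
proof (rule tendsto_sandwich)
  have small: "eventually (\<lambda>x. specnorm (E x) < 1) F"
    using order_tendstoD(2)[OF E] by simp
  show "eventually (\<lambda>x. 1 / (1 + specnorm (E x)) \<le> specnorm (matrix_inv (mat 1 + E x))) F"
    using small by eventually_elim (rule specnorm_inv_id_plus_bounds(1))
  show "eventually (\<lambda>x. specnorm (matrix_inv (mat 1 + E x)) \<le> 1 / (1 - specnorm (E x))) F"
    using small by eventually_elim (rule specnorm_inv_id_plus_bounds(2))
  show "((\<lambda>x. 1 / (1 + specnorm (E x))) \<longlongrightarrow> 1) F"
    using tendsto_divide[OF tendsto_const[of 1] tendsto_add[OF tendsto_const[of 1] E]] by simp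
  show "((\<lambda>x. 1 / (1 - specnorm (E x))) \<longlongrightarrow> 1) F"
    using tendsto_divide[OF tendsto_const[of 1] tendsto_diff[OF tendsto_const[of 1] E]] by simp
qed

lemma zeta2_tendsto_one: "((\<lambda>\<nu>. zeta2 M L P \<nu>) \<longlongrightarrow> 1) (at_right 0)"
proof -
  define G where "G = dsqrt (matrix_inv M) ** L ** dsqrt (matrix_inv M) ** (mat 1 - P)"
  have "((\<lambda>\<nu>. \<bar>sqrt \<nu>\<bar> * specnorm G) \<longlongrightarrow> \<bar>sqrt 0\<bar> * specnorm G) (at_right 0)"
    by (intro tendsto_intros tendsto_ident_at)
  then have "((\<lambda>\<nu>. specnorm (sqrt \<nu> *\<^sub>R G)) \<longlongrightarrow> 0) (at_right 0)"
    by (simp add: specnorm_scaleR)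
  then show ?thesis
    unfolding zeta2_def G_def[symmetric] by (rule tendsto_specnorm_inv_id_plus)
qed

section \<open>Coercive shifted systems\<close>

lemma posdef_symmetric_part_coercive:
  fixes L :: "real^'n^'n"
  assumes pd: "posdef (L + transpose L)"
  obtains c where "c > 0" and "\<And>x. c * (norm x)\<^sup>2 \<le> x \<bullet> (L *v x)"
proof -
  let ?q = "\<lambda>x. x \<bullet> (L *v x)"
  have sym_part: "x \<bullet> ((L + transpose L) *v x) = 2 * ?q x" for x
    using inner_transpose_mult_vec[of L x x]
    by (simp add: matrix_vector_mult_add_rdistrib inner_add_right inner_commute del: transpose_matrix_vector)
  have homogeneous: "?q (a *\<^sub>R x) = a\<^sup>2 * ?q x" for a x
    by (simp add: matrix_vector_mult_scaleR power2_eq_square del: transpose_matrix_vector)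
  have "continuous_on (sphere 0 1) ?q"
    by (intro continuous_intros linear_continuous_on matrix_vector_mul_bounded_linear)
  moreover have "sphere (0::real^'n) 1 \<noteq> {}"
    by simp
  ultimately obtain x0 where x0: "x0 \<in> sphere 0 1"
    and min: "\<And>y. y \<in> sphere 0 1 \<Longrightarrow> ?q x0 \<le> ?q y"
    using continuous_attains_inf[of "sphere (0::real^'n) 1" ?q] by auto
  then have "0 < 2 * ?q x0"
    using pd sym_part unfolding posdef_def by (metis mem_sphere_0 zero_neq_one norm_zero)
  moreover have "?q x0 * (norm x)\<^sup>2 \<le> ?q x" for x
  proof (cases "x = 0")
    case False
    then have "(norm x)\<^sup>2 * ?q x0 \<le> (norm x)\<^sup>2 * ?q (x /\<^sub>R norm x)"
      by (intro mult_left_mono min) simp_all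
    also have "\<dots> = ?q x"
      using homogeneous[of "norm x" "x /\<^sub>R norm x"] False by simp
    finally show ?thesis
      by (simp only: mult.commute)
  qed simp
  ultimately show ?thesis
    using that by simp
qed

lemma inner_diag_mat_eq:
  assumes "\<And>i. d i \<ge> 0"
  shows "x \<bullet> (diag_mat d *v y)
    = (diag_mat (\<lambda>i. sqrt (d i)) *v x) \<bullet> (diag_mat (\<lambda>i. sqrt (d i)) *v y)"
proof -
  have termwise: "x $ i * (d i * y $ i) = (sqrt (d i) * x $ i) * (sqrt (d i) * y $ i)" for i
  proof -
    have "sqrt (d i) * sqrt (d i) = d i"
      using assms by simp
    then show ?thesis
      by (metis mult.assoc mult.left_commute)
  qed
  show ?thesis
    unfolding inner_vec_def diag_mat_mult_vec vec_lambda_beta inner_real_def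
    by (intro sum.cong refl termwise)
qed

lemma shifted_diag_system_energy_estimate:
  fixes L :: "real^'n^'n"
  assumes "0 \<le> e \<bullet> (L *v e)" and "t \<ge> 0" and d: "\<And>i. d i \<ge> 0"
    and eq: "(t *\<^sub>R L + diag_mat d) *v e = diag_mat d *v v"
  defines "Dh \<equiv> diag_mat (\<lambda>i. sqrt (d i))"
  shows "norm (Dh *v e) \<le> norm (Dh *v v)"
proof -
  have "t * (e \<bullet> (L *v e)) + e \<bullet> (diag_mat d *v e) = e \<bullet> (diag_mat d *v v)"
    using arg_cong[OF eq, of "inner e"]
    by (simp add: matrix_vector_mult_add_rdistrib scaleR_matrix_vector_assoc[symmetric] inner_add_right)
  moreover have "0 \<le> t * (e \<bullet> (L *v e))"
    using assms(1,2) by simp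
  ultimately have "(norm (Dh *v e))\<^sup>2 \<le> (Dh *v e) \<bullet> (Dh *v v)"
    by (simp add: Dh_def inner_diag_mat_eq[OF d] power2_norm_eq_inner)
  also have "\<dots> \<le> norm (Dh *v e) * norm (Dh *v v)"
    by (rule norm_cauchy_schwarz)
  finally show ?thesis
    by (cases "Dh *v e = 0") (auto simp: power2_eq_square)
qed

lemma shifted_diag_system_bound:
  fixes L :: "real^'n^'n"
  assumes c: "c > 0" and coercive: "\<And>x. c * (norm x)\<^sup>2 \<le> x \<bullet> (L *v x)"
    and d: "\<And>i. d i \<ge> 0"
  obtains K where "\<And>t e v. t > 0 \<Longrightarrow> (t *\<^sub>R L + diag_mat d) *v e = diag_mat d *v v
    \<Longrightarrow> norm e \<le> K * norm v"
proof -
  define Dh where "Dh = diag_mat (\<lambda>i. sqrt (d i))"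
  \<comment> \<open>\<open>W ** Dh\<close> projects onto the support of \<open>d\<close>, and \<open>L *v e\<close> vanishes off it.\<close>
  define W where "W = diag_mat (\<lambda>i. if d i = 0 then 0 else 1 / sqrt (d i))"
  define K where "K = specnorm W * specnorm Dh * specnorm L / c"
  have "norm e \<le> K * norm v"
    if t: "t > 0" and eq: "(t *\<^sub>R L + diag_mat d) *v e = diag_mat d *v v" for t e v
  proof -
    have "0 \<le> c * (norm e)\<^sup>2"
      using c by simp
    then have energy: "norm (Dh *v e) \<le> norm (Dh *v v)"
      unfolding Dh_def using coercive t d eq
      by (intro shifted_diag_system_energy_estimate) (auto intro: order_trans)
    have "(L *v e) $ i = 0" if "d i = 0" for i
      using arg_cong[OF eq, of "\<lambda>z. z $ i"] t that
      by (simp add: matrix_vector_mult_add_rdistrib scaleR_matrix_vector_assoc[symmetric] diag_mat_mult_vec)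
    then have "e \<bullet> (L *v e) = (W *v (Dh *v e)) \<bullet> (L *v e)"
      unfolding inner_vec_def W_def Dh_def diag_mat_mult_vec
      by (intro sum.cong refl) (simp add: d)
    then have "c * (norm e)\<^sup>2 \<le> norm (W *v (Dh *v e)) * norm (L *v e)"
      using coercive[of e] norm_cauchy_schwarz[of "W *v (Dh *v e)" "L *v e"] by linarith
    also have "\<dots> \<le> (specnorm W * norm (Dh *v v)) * (specnorm L * norm e)"
    proof (intro mult_mono specnorm_mult_vec_le)
      show "norm (W *v (Dh *v e)) \<le> specnorm W * norm (Dh *v v)"
        using specnorm_mult_vec_le[of W "Dh *v e"] energy specnorm_nonneg[of W]
        by (meson mult_left_mono order_trans)
    qed (simp_all add: specnorm_nonneg)
    also have "\<dots> \<le> (specnorm W * (specnorm Dh * norm v)) * (specnorm L * norm e)"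
      by (intro mult_right_mono mult_left_mono specnorm_mult_vec_le specnorm_nonneg mult_nonneg_nonneg) simp
    also have "\<dots> = c * (K * norm v) * norm e"
      using c by (simp add: K_def)
    finally have "c * norm e * norm e \<le> c * (K * norm v) * norm e"
      by (simp add: power2_eq_square mult.assoc)
    moreover have "0 \<le> K * norm v"
      unfolding K_def using c by (intro mult_nonneg_nonneg divide_nonneg_pos specnorm_nonneg) simp_all
    ultimately show ?thesis
      using c by (cases "e = 0") auto
  qed
  then show ?thesis
    using that by blast
qed

lemma specnorm_shifted_inverse_le:
  fixes L :: "real^'n^'n"
  assumes inv: "invertible (t *\<^sub>R L + diag_mat d)"
    and K: "\<And>e v. (t *\<^sub>R L + diag_mat d) *v e = diag_mat d *v v \<Longrightarrow> norm e \<le> K * norm v"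
  shows "specnorm (matrix_inv (t *\<^sub>R L + diag_mat d) ** (t *\<^sub>R L)) \<le> 1 + K"
proof (rule specnorm_le)
  fix x
  define T where "T = t *\<^sub>R L + diag_mat d"
  define e where "e = matrix_inv T *v (diag_mat d *v x)"
  have "T *v e = diag_mat d *v x"
    using inv by (simp add: T_def e_def matrix_vector_mul_assoc matrix_mul_assoc matrix_inv_right)
  then have bound: "norm e \<le> K * norm x"
    unfolding T_def by (rule K)
  have "t *\<^sub>R L = T - diag_mat d"
    by (simp add: T_def)
  then have "(matrix_inv T ** (t *\<^sub>R L)) *v x = (matrix_inv T ** T) *v x - e"
    by (simp add: e_def matrix_vector_mul_assoc[symmetric] matrix_vector_mult_diff_distrib
        matrix_vector_mult_diff_rdistrib)
  also have "\<dots> = x - e"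
    using inv by (simp add: T_def matrix_inv_left)
  finally show "norm ((matrix_inv (t *\<^sub>R L + diag_mat d) ** (t *\<^sub>R L)) *v x) \<le> (1 + K) * norm x"
    using bound norm_triangle_ineq4[of x e] by (simp add: T_def distrib_right)
qed

lemma zeta1_bounded:
  fixes L :: "real^'n^'n"
  assumes m: "\<And>i. m i > 0" and p: "\<And>i. p i \<in> {0, 1}" and pd: "posdef (L + transpose L)"
  shows "\<exists>C. eventually (\<lambda>\<nu>. zeta1 (diag_mat m) L (diag_mat p) \<nu> \<le> C) (at_right 0)"
proof -
  obtain c where c: "c > 0" "\<And>x. c * (norm x)\<^sup>2 \<le> x \<bullet> (L *v x)"
    using posdef_symmetric_part_coercive[OF pd] by blast
  define d where "d = (\<lambda>i. m i * (1 - p i))"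
  have "d i \<ge> 0" for i
    using m[of i] p[of i] by (auto simp: d_def)
  then obtain K where K: "\<And>t e v. t > 0 \<Longrightarrow> (t *\<^sub>R L + diag_mat d) *v e = diag_mat d *v v
    \<Longrightarrow> norm e \<le> K * norm v"
    using shifted_diag_system_bound[OF c] by blast
  define R where "R = dsqrt (diag_mat m)"
  define Ri where "Ri = dsqrt (matrix_inv (diag_mat m))"
  have uniform: "zeta1 (diag_mat m) L (diag_mat p) \<nu> \<le> specnorm R * (1 + K) * specnorm Ri"
    if "\<nu> > 0" for \<nu>
  proof -
    define T where "T = sqrt \<nu> *\<^sub>R L + diag_mat d"
    have "invertible T"
      using K[of "sqrt \<nu>" _ 0] \<open>\<nu> > 0\<close> by (intro invertible_if_kernel_trivial) (simp add: T_def)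
    then have T_bound: "specnorm (matrix_inv T ** (sqrt \<nu> *\<^sub>R L)) \<le> 1 + K"
      unfolding T_def using K[of "sqrt \<nu>"] \<open>\<nu> > 0\<close>
      by (intro specnorm_shifted_inverse_le) simp_all
    have "sqrt \<nu> *\<^sub>R L + diag_mat m ** (mat 1 - diag_mat p) = T"
      by (simp add: T_def d_def mat_one_eq_diag_mat)
    then have "zeta1 (diag_mat m) L (diag_mat p) \<nu>
        = specnorm (R ** (matrix_inv T ** (sqrt \<nu> *\<^sub>R L)) ** Ri)"
      unfolding zeta1_def R_def Ri_def by (simp add: matrix_mul_assoc)
    also have "\<dots> \<le> specnorm R * specnorm (matrix_inv T ** (sqrt \<nu> *\<^sub>R L)) * specnorm Ri"
      by (intro order_trans[OF specnorm_mult_le] mult_right_mono specnorm_mult_le specnorm_nonneg)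
    also have "\<dots> \<le> specnorm R * (1 + K) * specnorm Ri"
      by (intro mult_right_mono mult_left_mono T_bound specnorm_nonneg)
    finally show ?thesis .
  qed
  have "eventually (\<lambda>\<nu>. zeta1 (diag_mat m) L (diag_mat p) \<nu> \<le> specnorm R * (1 + K) * specnorm Ri)
      (at_right 0)"
    using eventually_at_right_less[of "0::real"] by (rule eventually_mono) (rule uniform)
  then show ?thesis ..
qed

lemma control_constraint_eigenvalue_bound:
  fixes L :: "real^'n^'n"
  assumes m: "\<And>i. m i > 0" and p: "\<And>i. p i \<in> {0, 1}" and "\<nu> > 0"
    and inv: "invertible (Shat (diag_mat m) L (diag_mat p) \<nu> 1 0)"
    and ev: "is_eigenvalue (matrix_inv (Shat (diag_mat m) L (diag_mat p) \<nu> 1 0)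
      ** Smat (diag_mat m) L (diag_mat p) \<nu> 1 0) lam"
  shows "lam \<le> (zeta1 (diag_mat m) L (diag_mat p) \<nu>)\<^sup>2 + (1 + zeta1 (diag_mat m) L (diag_mat p) \<nu>)\<^sup>2"
proof -
  note factorization = control_constraint_factorization[where m = m and p = p, OF m p \<open>\<nu> > 0\<close>]
  show ?thesis
    unfolding factorization(3)[OF inv] by (rule eigenvalue_bound_split_factor[OF factorization(1,2) inv ev])
qed

lemma state_constraint_eigenvalue_bound:
  fixes L :: "real^'n^'n"
  assumes m: "\<And>i. m i > 0" and p: "\<And>i. p i \<in> {0, 1}" and "\<nu> > 0"
    and inv: "invertible (Shat (diag_mat m) L (diag_mat p) \<nu> 0 1)"
    and ev: "is_eigenvalue (matrix_inv (Shat (diag_mat m) L (diag_mat p) \<nu> 0 1)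
      ** Smat (diag_mat m) L (diag_mat p) \<nu> 0 1) lam"
  shows "lam \<le> (zeta2 (diag_mat m) L (diag_mat p) \<nu>)\<^sup>2 + (1 + zeta2 (diag_mat m) L (diag_mat p) \<nu>)\<^sup>2"
proof -
  note factorization = state_constraint_factorization[where m = m and p = p, OF m p \<open>\<nu> > 0\<close>]
  show ?thesis
    unfolding factorization(3)[OF inv] by (rule eigenvalue_bound_split_factor[OF factorization(1,2) inv ev])
qed

theorem proposition4p7:
  fixes M L P :: "real^'n^'n"
  assumes M_diag: "is_diag M" and M_pos: "\<forall>i. M $ i $ i > 0"
    and L_inv: "invertible L"
    and P_diag: "is_diag P" and P_01: "\<forall>i. P $ i $ i \<in> {0, 1}"
  shows
    "(\<forall>\<nu> lam. \<nu> > 0 \<longrightarrow> invertible (Shat M L P \<nu> 1 0) \<longrightarrow>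
        is_eigenvalue (matrix_inv (Shat M L P \<nu> 1 0) ** Smat M L P \<nu> 1 0) lam \<longrightarrow>
        lam \<le> (zeta1 M L P \<nu>)\<^sup>2 + (1 + zeta1 M L P \<nu>)\<^sup>2)
   \<and> (posdef (L + transpose L) \<longrightarrow>
        (\<exists>C. eventually (\<lambda>\<nu>. zeta1 M L P \<nu> \<le> C) (at_right 0)))
   \<and> (\<forall>\<nu> lam. \<nu> > 0 \<longrightarrow> invertible (Shat M L P \<nu> 0 1) \<longrightarrow>
        is_eigenvalue (matrix_inv (Shat M L P \<nu> 0 1) ** Smat M L P \<nu> 0 1) lam \<longrightarrow>
        lam \<le> (zeta2 M L P \<nu>)\<^sup>2 + (1 + zeta2 M L P \<nu>)\<^sup>2)
   \<and> ((\<lambda>\<nu>. zeta2 M L P \<nu>) \<longlongrightarrow> 1) (at_right 0)"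
proof -
  define m where "m = (\<lambda>i. M $ i $ i)"
  define p where "p = (\<lambda>i. P $ i $ i)"
  have M: "M = diag_mat m" and P: "P = diag_mat p"
    using is_diag_eq_diag_mat M_diag P_diag unfolding m_def p_def by blast+
  have m: "\<And>i. m i > 0" and p: "\<And>i. p i \<in> {0, 1}"
    using M_pos P_01 unfolding m_def p_def by blast+
  show ?thesis
    unfolding M P
    by (intro conjI allI impI zeta2_tendsto_one
        control_constraint_eigenvalue_bound[where m = m and p = p, OF m p]
        state_constraint_eigenvalue_bound[where m = m and p = p, OF m p]
        zeta1_bounded[where m = m and p = p, OF m p])
qed

end
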